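(* Let $x$ be an aperiodic infinite word over a finite alphabet which is the sesquipower induced by a sequence $\{v_n\}_{n=1}^\infty$ of finite words, and suppose $x$ avoids $k$-anti-powers for some integer $k\ge2$. Then there exists a nonempty word $u$ of length at most $k-1$ such that for every $\ell>0$ there is some $n>0$ such that $u^\ell$ is a factor of $v_n$.
   Context: Given a sequence $\{v_n\}_{n=1}^\infty$ of finite words, define $w_1=v_1$ and $w_{n+1}=w_nv_nw_n$; the limit of $\{w_n\}$ is the sesquipower induced by $\{v_n\}$. An infinite word is aperiodic if no suffix of it equals $u^\omega$ for a finite word $u$. A factor is a contiguous subword; $u^\ell$ is $\ell$ concatenated copies of $u$. A $k$-anti-power is a word $w=w_1\cdots w_k$ with $|w_1|=\cdots=|w_k|\ge1$ and $w_1,\dots,w_k$ pairwise distinct; $x$ avoids $k$-anti-powers if none of its factors is a $k$-anti-power. *)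

theory Defs
  imports Main "HOL-Library.Sublist"
begin

text \<open>The sequence v_1, v_2, ... is a function v :: nat => 'a list (v 0 is unused).
  sesq v n is the word w_(n+1): w_1 = v_1, w_(n+1) = w_n v_n w_n.\<close>

fun sesq :: "(nat \<Rightarrow> 'a list) \<Rightarrow> nat \<Rightarrow> 'a list" where
  "sesq v 0 = v 1"
| "sesq v (Suc n) = sesq v n @ v (Suc n) @ sesq v n"

definition is_sesquipower :: "(nat \<Rightarrow> 'a) \<Rightarrow> (nat \<Rightarrow> 'a list) \<Rightarrow> bool" where
  "is_sesquipower x v \<longleftrightarrow>
     (\<forall>n. \<forall>i < length (sesq v n). x i = sesq v n ! i) \<and>
     (\<forall>N. \<exists>n. N \<le> length (sesq v n))"

definition aperiodic :: "(nat \<Rightarrow> 'a) \<Rightarrow> bool" where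
  "aperiodic x \<longleftrightarrow>
     \<not> (\<exists>N u. u \<noteq> [] \<and> (\<forall>i. x (N + i) = u ! (i mod length u)))"

definition inf_factor :: "'a list \<Rightarrow> (nat \<Rightarrow> 'a) \<Rightarrow> bool" where
  "inf_factor y x \<longleftrightarrow> (\<exists>i. y = map x [i..<i + length y])"

definition anti_power :: "nat \<Rightarrow> 'a list \<Rightarrow> bool" where
  "anti_power k w \<longleftrightarrow>
     (\<exists>m \<ge> 1. length w = k * m \<and>
        distinct (map (\<lambda>j. take m (drop (j * m) w)) [0..<k]))"

definition avoids_anti_powers :: "nat \<Rightarrow> (nat \<Rightarrow> 'a) \<Rightarrow> bool" where
  "avoids_anti_powers k x \<longleftrightarrow> (\<forall>y. inf_factor y x \<longrightarrow> \<not> anti_power k y)"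

definition lpow :: "'a list \<Rightarrow> nat \<Rightarrow> 'a list" where
  "lpow u l = concat (replicate l u)"

end

theory Submission
  imports Defs
begin

text \<open>Avoiding \<open>k\<close>-anti-powers means that among any \<open>k\<close> consecutive blocks of
  a common length \<open>m\<close> in \<open>x\<close>, two coincide. Doing this for \<open>k\<^sup>2 + 1\<close>
  consecutive block lengths, two lengths \<open>m < m + r\<close> select the same pair of
  positions \<open>i < j\<close>, and comparing the two coincidences shows that \<open>x\<close> has
  period \<open>(j - i) r\<close> on a window of length about \<open>m\<close>. Inside such a window
  with period \<open>P\<close>, two equal blocks of length \<open>P + 1\<close> give a shift by a
  multiple of \<open>P + 1\<close>, which modulo \<open>P\<close> is a period \<open>\<delta> \<le> k - 1\<close>. So \<open>x\<close>
  has arbitrarily long windows with a period below \<open>k\<close>.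

  As \<open>x\<close> is aperiodic, some \<open>w\<^sub>n\<^sub>0\<close> has no period below \<open>k\<close>; then no
  \<open>\<delta>\<close>-periodic prefix or suffix of any \<open>w\<^sub>n\<close> is longer than \<open>w\<^sub>n\<^sub>0\<close>.
  Splitting \<open>w\<^sub>n\<^sub>+\<^sub>1 = w\<^sub>n v\<^sub>n w\<^sub>n\<close>, a long \<open>\<delta>\<close>-periodic factor of \<open>x\<close>
  therefore contains a \<open>\<delta>\<close>-periodic factor of some \<open>v\<^sub>m\<close> that is shorter by at
  most \<open>2 |w\<^sub>n\<^sub>0|\<close>, and this factor contains \<open>u\<^sup>l\<close> for its prefix \<open>u\<close> of
  length \<open>\<delta>\<close>. There are only finitely many candidates \<open>u\<close> over the finite
  alphabet, so one of them works for every \<open>l\<close>.\<close>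

section \<open>Periods of finite words\<close>

definition has_period :: "nat \<Rightarrow> 'a list \<Rightarrow> bool" where
  "has_period d w \<longleftrightarrow> (\<forall>i. i + d < length w \<longrightarrow> w ! i = w ! (i + d))"

lemma has_period_sublist:
  assumes "has_period d w" "sublist y w"
  shows "has_period d y"
proof -
  obtain p s where w: "w = p @ y @ s" using assms(2) by (auto simp: sublist_def)
  show ?thesis unfolding has_period_def
  proof (intro allI impI)
    fix i assume i: "i + d < length y"
    have "length p + i + d < length w" using i w by simp
    then have "w ! (length p + i) = w ! (length p + i + d)"
      using assms(1) unfolding has_period_def by blast
    moreover have "w ! (length p + i) = y ! i" "w ! (length p + i + d) = y ! (i + d)"
      using i w by (simp_all add: nth_append add.assoc del: append_assoc)
    ultimately show "y ! i = y ! (i + d)" by simp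
  qed
qed

lemma take_drop_period:
  assumes "has_period d y" "2 * d \<le> length y"
  shows "take d (drop d y) = take d y"
proof (rule nth_equalityI)
  fix i assume "i < length (take d (drop d y))"
  then show "take d (drop d y) ! i = take d y ! i"
    using assms unfolding has_period_def by (simp add: add.commute)
qed (use assms(2) in simp)

lemma lpow_Suc: "lpow u (Suc l) = u @ lpow u l"
  unfolding lpow_def by simp

lemma lpow_add: "lpow u (a + b) = lpow u a @ lpow u b"
  unfolding lpow_def by (simp add: replicate_add)

lemma prefix_lpow_mono: "l' \<le> l \<Longrightarrow> prefix (lpow u l') (lpow u l)"
  using lpow_add[of u l' "l - l'"] by simp

lemma lpow_take_period:
  "has_period d y \<Longrightarrow> l * d \<le> length y \<Longrightarrow> lpow (take d y) l = take (l * d) y"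
proof (induction l arbitrary: y)
  case 0
  then show ?case by (simp add: lpow_def)
next
  case (Suc l)
  show ?case
  proof (cases l)
    case 0
    then show ?thesis by (simp add: lpow_def)
  next
    case (Suc l')
    have "2 * d \<le> length y" using Suc.prems(2) Suc by simp
    with Suc.prems(1) have "take d (drop d y) = take d y" by (rule take_drop_period)
    moreover have "has_period d (drop d y)"
      using Suc.prems(1) has_period_sublist suffix_drop suffix_imp_sublist by blast
    ultimately have "lpow (take d y) l = take (l * d) (drop d y)"
      using Suc.IH[of "drop d y"] Suc.prems(2) by simp
    then show ?thesis by (simp add: lpow_Suc take_add)
  qed
qed

lemma sublist_lpow_take_period:
  "has_period d y \<Longrightarrow> l * d \<le> length y \<Longrightarrow> sublist (lpow (take d y) l) y"
  by (simp add: lpow_take_period prefix_imp_sublist take_is_prefix)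

section \<open>Periodic factors of sesquipowers\<close>

lemma sublist_append3_cases:
  assumes "sublist z (A @ V @ B)"
  obtains "sublist z A" | "sublist z B"
    | s y p where "z = s @ y @ p" "suffix s A" "sublist y V" "prefix p B"
proof -
  consider "sublist z A" | "sublist z (V @ B)"
    | s r where "z = s @ r" "suffix s A" "prefix r (V @ B)"
    using assms unfolding sublist_append by blast
  then show thesis
  proof cases
    case 2
    then consider "sublist z V" | "sublist z B"
      | y p where "z = y @ p" "suffix y V" "prefix p B"
      unfolding sublist_append by blast
    then show thesis
    proof cases
      case (3 y p)
      then show thesis using that(3)[of "[]" y p] by (simp add: suffix_imp_sublist)
    qed (use that in \<open>auto intro: that(3)[of "[]" z "[]"]\<close>)
  next
    case (3 s r)
    from 3(3) consider "prefix r V" | p where "r = V @ p" "prefix p B"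
      unfolding prefix_append by blast
    then show thesis
    proof cases
      case 1
      then show thesis using that(3)[of s r "[]"] 3 by (simp add: prefix_imp_sublist)
    next
      case (2 p)
      then show thesis using that(3)[of s V p] 3 by simp
    qed
  qed (use that in blast)
qed

lemma sesq_prefix: "n \<le> n' \<Longrightarrow> prefix (sesq v n) (sesq v n')"
proof (induction n' rule: dec_induct)
  case (step m)
  then show ?case by (metis prefix_append sesq.simps(2))
qed simp

lemma sesq_suffix: "n \<le> n' \<Longrightarrow> suffix (sesq v n) (sesq v n')"
proof (induction n' rule: dec_induct)
  case (step m)
  then show ?case by (metis suffix_appendI sesq.simps(2))
qed simp

lemma not_has_period_sesq_mono:
  "\<not> has_period d (sesq v n) \<Longrightarrow> n \<le> n' \<Longrightarrow> \<not> has_period d (sesq v n')"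
  using has_period_sublist sesq_prefix prefix_imp_sublist by blast

lemma periodic_prefix_of_sesq_length_le:
  assumes "\<not> has_period d (sesq v n0)" "prefix p (sesq v n)" "has_period d p"
  shows "length p \<le> length (sesq v n0)"
proof (rule ccontr)
  assume "\<not> ?thesis"
  then have "length (sesq v n0) \<le> length p" by simp
  moreover have "prefix (sesq v n) (sesq v (max n n0))" "prefix (sesq v n0) (sesq v (max n n0))"
    by (intro sesq_prefix max.cobounded1 max.cobounded2)+
  ultimately have "prefix (sesq v n0) p"
    using prefix_length_prefix prefix_order.trans[OF assms(2)] by blast
  then show False using assms(1,3) has_period_sublist prefix_imp_sublist by blast
qed

lemma periodic_suffix_of_sesq_length_le:
  assumes "\<not> has_period d (sesq v n0)" "suffix s (sesq v n)" "has_period d s"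
  shows "length s \<le> length (sesq v n0)"
proof (rule ccontr)
  assume "\<not> ?thesis"
  then have "length (sesq v n0) \<le> length s" by simp
  moreover have "suffix (sesq v n) (sesq v (max n n0))" "suffix (sesq v n0) (sesq v (max n n0))"
    by (intro sesq_suffix max.cobounded1 max.cobounded2)+
  ultimately have "suffix (sesq v n0) s"
    using suffix_length_suffix suffix_order.trans[OF assms(2)] by blast
  then show False using assms(1,3) has_period_sublist suffix_imp_sublist by blast
qed

lemma periodic_factor_of_sesq_in_v:
  assumes "\<not> has_period d (sesq v n0)"
  shows "sublist z (sesq v N) \<Longrightarrow> has_period d z \<Longrightarrow>
    \<exists>M\<ge>1. \<exists>y. sublist y (v M) \<and> has_period d y \<and> length z \<le> length y + 2 * length (sesq v n0)"
proof (induction N arbitrary: z)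
  case 0
  then show ?case by (intro exI[of _ 1]) auto
next
  case (Suc N)
  from Suc.prems(1) have "sublist z (sesq v N @ v (Suc N) @ sesq v N)" by simp
  then show ?case
  proof (cases rule: sublist_append3_cases)
    case (3 s y p)
    have "sublist s z" "sublist y z" "sublist p z"
      unfolding 3(1) using sublist_appendI[of s "[]"] sublist_appendI[of y s p]
        sublist_appendI[of p "s @ y" "[]"] by simp_all
    then have "has_period d s" "has_period d y" "has_period d p"
      using Suc.prems(2) has_period_sublist by blast+
    moreover from this have "length s \<le> length (sesq v n0)" "length p \<le> length (sesq v n0)"
      using 3 periodic_suffix_of_sesq_length_le[OF assms] periodic_prefix_of_sesq_length_le[OF assms]
      by blast+
    moreover have "sublist y (v (Suc N))" by fact
    ultimately show ?thesis unfolding 3(1) by (intro exI[of _ "Suc N"] conjI exI[of _ y]) simp_all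
  next
    case 1
    from this Suc.prems(2) show ?thesis by (rule Suc.IH)
  next
    case 2
    from this Suc.prems(2) show ?thesis by (rule Suc.IH)
  qed
qed

section \<open>Periodic windows of infinite words\<close>

definition has_period_on :: "(nat \<Rightarrow> 'a) \<Rightarrow> nat \<Rightarrow> nat \<Rightarrow> nat \<Rightarrow> bool" where
  "has_period_on x d a b \<longleftrightarrow> (\<forall>q. a \<le> q \<longrightarrow> q + d < b \<longrightarrow> x q = x (q + d))"

lemma has_period_on_subinterval:
  "has_period_on x d a b \<Longrightarrow> a \<le> a' \<Longrightarrow> b' \<le> b \<Longrightarrow> has_period_on x d a' b'"
  unfolding has_period_on_def by auto

lemma has_period_on_mult:
  assumes "has_period_on x d a b" "a \<le> q" "q + c * d < b"
  shows "x q = x (q + c * d)"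
  using assms(3)
proof (induction c)
  case (Suc c)
  then have "x q = x (q + c * d)" by simp
  also have "\<dots> = x (q + c * d + d)" using assms(1,2) Suc.prems unfolding has_period_on_def by simp
  finally show ?case by (simp add: algebra_simps)
qed simp

lemma has_period_on_cong:
  assumes "has_period_on x d a b" "a \<le> q" "a \<le> q'" "q < b" "q' < b" "q mod d = q' mod d"
  shows "x q = x q'"
proof -
  have ordered: "x q = x q'" if le: "a \<le> q" "q \<le> q'" "q' < b" "q mod d = q' mod d" for q q'
  proof -
    have "d dvd q' - q" using mod_eq_dvd_iff_nat[of q q' d] le(2,4) by simp
    then obtain c where "q' - q = c * d" by (metis dvdE mult.commute)
    then have "q' = q + c * d" using le(2) by simp
    then show ?thesis using has_period_on_mult[OF assms(1) le(1), of c] le(3) by simp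
  qed
  show ?thesis
  proof (cases "q \<le> q'")
    case True
    then show ?thesis using ordered assms(2-6) by blast
  next
    case False
    then show ?thesis using ordered[of q' q] assms(2-6) by simp
  qed
qed

text \<open>Every position is congruent modulo \<open>d\<close> to one of the \<open>d\<close> positions
  of the window.\<close>

lemma has_period_on_spread:
  assumes "has_period_on x d a b" "d \<ge> 1" "a \<le> c" "c + d + \<delta> \<le> b"
    and window: "\<And>t. t < d \<Longrightarrow> x (c + t) = x (c + t + \<delta>)"
  shows "has_period_on x \<delta> a b"
  unfolding has_period_on_def
proof (intro allI impI)
  fix q assume q: "a \<le> q" "q + \<delta> < b"
  define t where "t = (q + d * c - c) mod d"
  have t: "t < d" using assms(2) unfolding t_def by simp
  have "c \<le> d * c" using assms(2) by simp
  then have "c + (q + d * c - c) = q + d * c" by linarith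
  then have "(c + t) mod d = (q + d * c) mod d"
    unfolding t_def by (metis mod_add_right_eq)
  then have congr: "(c + t) mod d = q mod d" by simp
  then have "(c + t + \<delta>) mod d = (q + \<delta>) mod d" by (metis mod_add_left_eq)
  then have "x (c + t + \<delta>) = x (q + \<delta>)"
    by (rule has_period_on_cong[OF assms(1), rotated 4]) (use q t assms(3,4) in auto)
  moreover have "x (c + t) = x q"
    by (rule has_period_on_cong[OF assms(1) _ _ _ _ congr]) (use q t assms(3,4) in auto)
  ultimately show "x q = x (q + \<delta>)" using window[OF t] by simp
qed

lemma has_period_map_upt_iff: "has_period d (map x [a..<b]) \<longleftrightarrow> has_period_on x d a b"
  unfolding has_period_def has_period_on_def
proof (intro iffI allI impI)
  fix q assume "\<forall>i. i + d < length (map x [a..<b]) \<longrightarrow> map x [a..<b] ! i = map x [a..<b] ! (i + d)"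
    and "a \<le> q" "q + d < b"
  then show "x q = x (q + d)" by (auto dest!: spec[of _ "q - a"])
qed (simp add: add.commute add.left_commute)

section \<open>Periodic windows forced by avoiding anti-powers\<close>

lemma avoids_anti_powers_equal_blocks:
  assumes "avoids_anti_powers k x" "m \<ge> 1"
  obtains i j where "i < j" "j < k" "\<And>t. t < m \<Longrightarrow> x (s + i * m + t) = x (s + j * m + t)"
proof -
  let ?y = "map x [s..<s + k * m]"
  let ?block = "\<lambda>i. take m (drop (i * m) ?y)"
  have "inf_factor ?y x" unfolding inf_factor_def by (intro exI[of _ s]) simp
  then have "\<not> distinct (map ?block [0..<k])"
    using assms unfolding avoids_anti_powers_def anti_power_def by auto
  then obtain i j where ij: "i < j" "j < k" "?block i = ?block j"
    by (auto simp: distinct_conv_nth) (metis linorder_neqE_nat)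
  have block_nth: "?block i' ! t = x (s + i' * m + t)" if "i' < k" "t < m" for i' t
  proof -
    have "(i' + 1) * m \<le> k * m" using that by (intro mult_right_mono) auto
    then show ?thesis using that by (simp add: add.assoc)
  qed
  show thesis
  proof (rule that[OF ij(1,2)])
    fix t assume "t < m"
    then show "x (s + i * m + t) = x (s + j * m + t)"
      using block_nth[of i t] block_nth[of j t] ij by simp
  qed
qed

lemma period_reduction_by_anti_powers:
  assumes "avoids_anti_powers k x" "has_period_on x P a b" "P \<ge> 1" "a + k * (P + 1) \<le> b"
  shows "\<exists>\<delta>\<ge>1. \<delta> \<le> k - 1 \<and> has_period_on x \<delta> a b"
proof -
  obtain i j where ij: "i < j" "j < k"
    and blocks: "\<And>t. t < P + 1 \<Longrightarrow> x (a + i * (P + 1) + t) = x (a + j * (P + 1) + t)"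
    using avoids_anti_powers_equal_blocks[OF assms(1), of "P + 1" a] by auto
  define c where "c = a + i * (P + 1)"
  define \<delta> where "\<delta> = j - i"
  have "(j + 1) * (P + 1) \<le> k * (P + 1)" using ij by (intro mult_right_mono) auto
  then have end_j: "a + j * (P + 1) + P < b" using assms(4) by simp
  have j_eq: "j = i + \<delta>" using ij unfolding \<delta>_def by simp
  have shift: "c + t + \<delta> * (P + 1) = a + j * (P + 1) + t" for t
    unfolding c_def j_eq by (simp add: algebra_simps)
  have "has_period_on x \<delta> a b"
  proof (rule has_period_on_spread[OF assms(2,3)])
    show "a \<le> c" unfolding c_def by simp
    show "c + P + \<delta> \<le> b" using shift[of P] end_j by (simp add: algebra_simps)
    fix t assume t: "t < P"
    have "x (c + t) = x (a + j * (P + 1) + t)" using blocks[of t] t unfolding c_def by simp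
    also have "\<dots> = x (c + t + \<delta> * (P + 1))" by (simp only: shift)
    also have "\<dots> = x (c + t + \<delta>)"
    proof (rule has_period_on_cong[OF assms(2)])
      have "c + t + \<delta> * (P + 1) = c + t + \<delta> + P * \<delta>" by (simp add: algebra_simps)
      then show "(c + t + \<delta> * (P + 1)) mod P = (c + t + \<delta>) mod P"
        by (simp only: mod_mult_self2)
    qed (use shift[of t] t end_j in \<open>auto simp: c_def\<close>)
    finally show "x (c + t) = x (c + t + \<delta>)" .
  qed
  moreover have "1 \<le> \<delta>" "\<delta> \<le> k - 1" using ij unfolding \<delta>_def by auto
  ultimately show ?thesis by blast
qed

lemma avoids_anti_powers_repeated_block_pair:
  assumes "avoids_anti_powers k x"
  obtains i j m r where "i < j" "j < k" "M \<le> m" "1 \<le> r" "r \<le> k * k"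
    "\<And>t. t < m \<Longrightarrow> x (i * m + t) = x (j * m + t)"
    "\<And>t. t < m + r \<Longrightarrow> x (i * (m + r) + t) = x (j * (m + r) + t)"
proof -
  let ?I = "{M + 1..M + 1 + k * k}"
  have "\<forall>m\<in>?I. \<exists>p. fst p < snd p \<and> snd p < k \<and> (\<forall>t<m. x (fst p * m + t) = x (snd p * m + t))"
  proof
    fix m assume "m \<in> ?I"
    then have "1 \<le> m" by simp
    then obtain i j where "i < j" "j < k" "\<And>t. t < m \<Longrightarrow> x (0 + i * m + t) = x (0 + j * m + t)"
      using avoids_anti_powers_equal_blocks[OF assms, where s = 0] by blast
    then show "\<exists>p. fst p < snd p \<and> snd p < k \<and> (\<forall>t<m. x (fst p * m + t) = x (snd p * m + t))"
      by (intro exI[of _ "(i, j)"]) auto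
  qed
  from bchoice[OF this] obtain f where f: "\<forall>m\<in>?I. fst (f m) < snd (f m) \<and> snd (f m) < k \<and>
      (\<forall>t<m. x (fst (f m) * m + t) = x (snd (f m) * m + t))"
    by (rule exE)
  have "f ` ?I \<subseteq> {..<k} \<times> {..<k}"
  proof (rule image_subsetI)
    fix m assume "m \<in> ?I"
    with f have "fst (f m) < snd (f m)" "snd (f m) < k" by auto
    then show "f m \<in> {..<k} \<times> {..<k}" by (simp add: mem_Times_iff)
  qed
  then have "card (f ` ?I) \<le> card ({..<k} \<times> {..<k})" by (intro card_mono) simp_all
  also have "\<dots> < card ?I" by (simp add: card_cartesian_product)
  finally obtain m1 m2 where "m1 \<in> ?I" "m2 \<in> ?I" "m1 \<noteq> m2" "f m1 = f m2"
    using pigeonhole unfolding inj_on_def by blast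
  then obtain m m' where mm': "m \<in> ?I" "m' \<in> ?I" "m < m'" "f m = f m'"
    by (metis linorder_neqE_nat)
  note block_m = bspec[OF f mm'(1)] and block_m' = bspec[OF f mm'(2)]
  show thesis
  proof (rule that)
    show "fst (f m) < snd (f m)" "snd (f m) < k" using block_m by simp_all
    show "M \<le> m" "1 \<le> m' - m" "m' - m \<le> k * k" using mm'(1-3) by auto
    show "x (fst (f m) * m + t) = x (snd (f m) * m + t)" if "t < m" for t
      using block_m that by blast
    show "x (fst (f m) * (m + (m' - m)) + t) = x (snd (f m) * (m + (m' - m)) + t)"
      if "t < m + (m' - m)" for t
    proof -
      have m': "m + (m' - m) = m'" using mm'(3) by simp
      have "\<forall>t<m'. x (fst (f m') * m' + t) = x (snd (f m') * m' + t)" using block_m' by blast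
      then show ?thesis using that unfolding mm'(4) m' by blast
    qed
  qed
qed

lemma has_period_on_from_block_pairs:
  assumes "i \<le> j"
    and short: "\<And>t. t < m \<Longrightarrow> x (i * m + t) = x (j * m + t)"
    and long: "\<And>t. t < m + r \<Longrightarrow> x (i * (m + r) + t) = x (j * (m + r) + t)"
  shows "has_period_on x ((j - i) * r) (j * m + i * r) (j * m + m + (j - i) * r)"
  unfolding has_period_on_def
proof (intro allI impI)
  fix q assume q: "j * m + i * r \<le> q" "q + (j - i) * r < j * m + m + (j - i) * r"
  then obtain e where e: "q = j * m + i * r + e" using le_Suc_ex by blast
  with q(2) have e_bound: "i * r + e < m" by simp
  have "x q = x (i * m + (i * r + e))" using short[OF e_bound] e by (simp add: algebra_simps)
  also have "\<dots> = x (i * (m + r) + e)" by (simp add: algebra_simps)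
  also have "\<dots> = x (j * (m + r) + e)" using long e_bound by simp
  also have "\<dots> = x (q + (j - i) * r)"
  proof -
    obtain d where "j = i + d" using assms(1) le_Suc_ex by blast
    then show ?thesis using e by (simp add: algebra_simps)
  qed
  finally show "x q = x (q + (j - i) * r)" .
qed

lemma bounded_period_windows:
  assumes "avoids_anti_powers k x"
  shows "\<exists>a P. 1 \<le> P \<and> P \<le> k * (k * k) \<and> has_period_on x P a (a + L)"
proof -
  obtain i j m r where ij: "i < j" "j < k" and r: "1 \<le> r" "r \<le> k * k" and m: "L + k * (k * k) \<le> m"
    and short: "\<And>t. t < m \<Longrightarrow> x (i * m + t) = x (j * m + t)"
    and long: "\<And>t. t < m + r \<Longrightarrow> x (i * (m + r) + t) = x (j * (m + r) + t)"
    using avoids_anti_powers_repeated_block_pair[OF assms] by metis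
  define P where "P = (j - i) * r"
  have period: "has_period_on x P (j * m + i * r) (j * m + m + P)"
    unfolding P_def using ij(1) short long by (intro has_period_on_from_block_pairs) auto
  have "i * r \<le> k * (k * k)" using ij r by (intro mult_le_mono) auto
  then have "j * m + i * r + L \<le> j * m + m + P" using m by linarith
  then have "has_period_on x P (j * m + i * r) (j * m + i * r + L)"
    using period by (rule has_period_on_subinterval[rotated 2]) simp
  moreover have "1 \<le> P" "P \<le> k * (k * k)" unfolding P_def using ij r by (auto intro: mult_le_mono)
  ultimately show ?thesis by blast
qed

lemma short_period_windows:
  assumes "avoids_anti_powers k x"
  shows "\<exists>a \<delta>. 1 \<le> \<delta> \<and> \<delta> \<le> k - 1 \<and> has_period_on x \<delta> a (a + L)"
proof -
  obtain a P where P: "1 \<le> P" "P \<le> k * (k * k)"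
    and period: "has_period_on x P a (a + (L + k * (k * (k * k) + 1)))"
    using bounded_period_windows[OF assms] by blast
  have "k * (P + 1) \<le> k * (k * (k * k) + 1)" using P by simp
  then have "a + k * (P + 1) \<le> a + (L + k * (k * (k * k) + 1))" by linarith
  then obtain \<delta> where "1 \<le> \<delta>" "\<delta> \<le> k - 1"
    and "has_period_on x \<delta> a (a + (L + k * (k * (k * k) + 1)))"
    using period_reduction_by_anti_powers[OF assms period P(1)] by blast
  moreover from this(3) have "has_period_on x \<delta> a (a + L)"
    by (rule has_period_on_subinterval) simp_all
  ultimately show ?thesis by blast
qed

section \<open>Aperiodic sesquipowers\<close>

lemma sesq_length_unbounded: "is_sesquipower x v \<Longrightarrow> \<exists>n. N \<le> length (sesq v n)"
  unfolding is_sesquipower_def by simp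

lemma sesq_eq_map_upt:
  assumes "is_sesquipower x v"
  shows "sesq v n = map x [0..<length (sesq v n)]"
  using assms unfolding is_sesquipower_def by (intro nth_equalityI) auto

lemma sublist_map_upt_sesq:
  assumes "is_sesquipower x v" "b \<le> length (sesq v n)"
  shows "sublist (map x [a..<b]) (sesq v n)"
proof (cases "a \<le> b")
  case True
  have "[0..<length (sesq v n)] = [0..<a] @ [a..<b] @ [b..<length (sesq v n)]"
    using upt_add_eq_append[of 0 b "length (sesq v n) - b"] upt_add_eq_append[of 0 a "b - a"]
      True assms(2) by simp
  then show ?thesis by (subst sesq_eq_map_upt[OF assms(1)]) (simp add: sublist_appendI)
qed simp

lemma set_v_subset_range:
  assumes "is_sesquipower x v" "1 \<le> M"
  shows "set (v M) \<subseteq> range x"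
proof -
  obtain M' where "M = Suc M'" using assms(2) by (cases M) auto
  then have "set (v M) \<subseteq> set (sesq v M)" by auto
  also have "\<dots> \<subseteq> range x" by (subst sesq_eq_map_upt[OF assms(1)]) auto
  finally show ?thesis .
qed

lemma not_aperiodic_if_period:
  assumes "1 \<le> d" "\<And>i. x (i + d) = x i"
  shows "\<not> aperiodic x"
proof -
  have "x i = map x [0..<d] ! (i mod d)" for i
  proof (induction i rule: less_induct)
    case (less i)
    show ?case
    proof (cases "i < d")
      case False
      then have "x i = x (i - d)" using assms(2)[of "i - d"] by simp
      then show ?thesis using less.IH[of "i - d"] False assms(1) by (simp add: le_mod_geq)
    qed simp
  qed
  then show ?thesis unfolding aperiodic_def using assms(1)
    by (intro notI) (auto dest!: spec[of _ 0] spec[of _ "map x [0..<d]"])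
qed

lemma ex_sesq_not_has_period:
  assumes "aperiodic x" "is_sesquipower x v" "1 \<le> d"
  shows "\<exists>n. \<not> has_period d (sesq v n)"
proof (rule ccontr)
  assume "\<nexists>n. \<not> has_period d (sesq v n)"
  then have "has_period_on x d 0 (length (sesq v n))" for n
    using sesq_eq_map_upt[OF assms(2), of n] has_period_map_upt_iff by metis
  moreover have "\<exists>n. i + d < length (sesq v n)" for i
    using sesq_length_unbounded[OF assms(2), of "Suc (i + d)"] by (simp add: Suc_le_eq)
  ultimately have "x (i + d) = x i" for i unfolding has_period_on_def by (metis le0)
  then show False using not_aperiodic_if_period assms(1,3) by blast
qed

lemma ex_sesq_no_short_period:
  assumes "aperiodic x" "is_sesquipower x v"
  shows "\<exists>n0. \<forall>d\<in>{1..K}. \<not> has_period d (sesq v n0)"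
proof -
  have "\<forall>d\<in>{1..K}. eventually (\<lambda>n. \<not> has_period d (sesq v n)) sequentially"
    using ex_sesq_not_has_period[OF assms] not_has_period_sesq_mono
    unfolding eventually_sequentially by (metis atLeastAtMost_iff)
  then have "eventually (\<lambda>n. \<forall>d\<in>{1..K}. \<not> has_period d (sesq v n)) sequentially"
    by (rule eventually_ball_finite[rotated]) simp
  then show ?thesis by (auto simp: eventually_sequentially)
qed

lemma short_word_power_in_v:
  assumes "aperiodic x" "is_sesquipower x v" "avoids_anti_powers k x"
  shows "\<exists>u. u \<noteq> [] \<and> length u \<le> k - 1 \<and> set u \<subseteq> range x \<and> (\<exists>n>0. sublist (lpow u l) (v n))"
proof -
  obtain n0 where n0: "\<forall>d\<in>{1..k - 1}. \<not> has_period d (sesq v n0)"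
    using ex_sesq_no_short_period[OF assms(1,2)] by blast
  define L where "L = Suc l * (k - 1) + 2 * length (sesq v n0)"
  obtain a \<delta> where \<delta>: "1 \<le> \<delta>" "\<delta> \<le> k - 1" and "has_period_on x \<delta> a (a + L)"
    using short_period_windows[OF assms(3)] by blast
  then have z_period: "has_period \<delta> (map x [a..<a + L])"
    by (simp add: has_period_map_upt_iff)
  obtain N where "a + L \<le> length (sesq v N)"
    using sesq_length_unbounded[OF assms(2)] by blast
  then have "sublist (map x [a..<a + L]) (sesq v N)"
    by (rule sublist_map_upt_sesq[OF assms(2)])
  moreover have "\<not> has_period \<delta> (sesq v n0)" using n0 \<delta> by simp
  ultimately obtain M y where y: "1 \<le> M" "sublist y (v M)" "has_period \<delta> y"
    and "length (map x [a..<a + L]) \<le> length y + 2 * length (sesq v n0)"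
    using periodic_factor_of_sesq_in_v z_period by blast
  then have "Suc l * \<delta> \<le> length y"
    unfolding L_def length_map length_upt using mult_le_mono2[OF \<delta>(2), of "Suc l"] by linarith
  then have u: "length (take \<delta> y) = \<delta>" "sublist (lpow (take \<delta> y) l) y"
    by (simp, intro sublist_lpow_take_period[OF y(3)], simp)
  have "set (take \<delta> y) \<subseteq> set y" by (rule set_take_subset)
  also have "\<dots> \<subseteq> set (v M)" by (rule set_mono_sublist[OF y(2)])
  also have "\<dots> \<subseteq> range x" by (rule set_v_subset_range[OF assms(2) y(1)])
  finally show ?thesis
    using u \<delta> y(1,2) by (intro exI[of _ "take \<delta> y"] conjI exI[of _ M])
      (auto intro: sublist_order.order.trans)
qed

lemma finite_witness_of_antimono:
  assumes "finite U" "\<And>l. \<exists>u\<in>U. P u l" "\<And>u l l'. P u l \<Longrightarrow> l' \<le> l \<Longrightarrow> P u l'"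
  shows "\<exists>u\<in>U. \<forall>l. P u (l :: nat)"
proof -
  obtain f where f: "\<And>l. f l \<in> U \<and> P (f l) l" using assms(2) by metis
  then have "finite (range f)" using assms(1) by (metis finite_subset image_subsetI)
  then obtain l0 where "infinite {l. f l = f l0}"
    using pigeonhole_infinite[of UNIV f] by auto
  then have "\<exists>l'\<ge>l. f l' = f l0" for l
    unfolding finite_nat_set_iff_bounded_le by (metis mem_Collect_eq nat_le_linear)
  then have "P (f l0) l" for l using f assms(3) by metis
  then show ?thesis using f by blast
qed

theorem theorem4p14:
  fixes x :: "nat \<Rightarrow> 'a" and v :: "nat \<Rightarrow> 'a list" and k :: nat
  assumes "finite (range x)"
    and "aperiodic x"
    and "is_sesquipower x v"
    and "k \<ge> 2"
    and "avoids_anti_powers k x"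
  shows "\<exists>u. u \<noteq> [] \<and> length u \<le> k - 1 \<and>
           (\<forall>l > 0. \<exists>n > 0. sublist (lpow u l) (v n))"
proof -
  define U where "U = {u. u \<noteq> [] \<and> length u \<le> k - 1 \<and> set u \<subseteq> range x}"
  have "finite U"
    unfolding U_def by (rule finite_subset[OF _ finite_lists_length_le[OF assms(1)]]) blast
  moreover have "\<exists>u\<in>U. \<exists>n>0. sublist (lpow u l) (v n)" for l
    using short_word_power_in_v[OF assms(2,3,5)] unfolding U_def by blast
  moreover have "\<exists>n>0. sublist (lpow u l') (v n)" if "\<exists>n>0. sublist (lpow u l) (v n)" "l' \<le> l"
    for u l l'
  proof -
    have "sublist (lpow u l') (lpow u l)" using prefix_lpow_mono[OF that(2)] by (rule prefix_imp_sublist)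
    then show ?thesis using that(1) by (blast intro: sublist_order.order.trans)
  qed
  ultimately have "\<exists>u\<in>U. \<forall>l. \<exists>n>0. sublist (lpow u l) (v n)"
    by (rule finite_witness_of_antimono)
  then show ?thesis unfolding U_def by blast
qed

end
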